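(* Let $(M,\phi,\xi,\eta,g)$ be a $(2n+1)$-dimensional almost contact metric manifold and $(\bar M,\bar J,\bar g)$ the corresponding almost Hermitian manifold on $M\times\mathbb R$. Then $\bar R(\bar X,\bar Y,\bar Z,\bar W)=\bar R(\bar J\bar X,\bar J\bar Y,\bar J\bar Z,\bar J\bar W)$ for all vector fields $\bar X,\bar Y,\bar Z,\bar W$ on $\bar M$ if and only if, for all indices $i,j,k,l$, the following hold: $$R_{ijkl}-\phi_i{}^a\phi_j{}^b\phi_k{}^c\phi_l{}^dR_{abcd}=g_{il}\eta_j\eta_k+g_{jk}\eta_i\eta_l-g_{ik}\eta_j\eta_l-g_{jl}\eta_i\eta_k,$$ $$\xi^a\phi_j{}^b\phi_k{}^c\phi_l{}^dR_{abcd}=0,\qquad \xi^a\xi^c\phi_j{}^b\phi_l{}^dR_{abcd}=-g_{jl}+\eta_j\eta_l.$$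
   Context: An almost contact metric manifold $(M,\phi,\xi,\eta,g)$ of dimension $2n+1$: $\phi$ a $(1,1)$-tensor, $\xi$ a vector field, $\eta$ a 1-form, $g$ a Riemannian metric with $\phi^2X=-X+\eta(X)\xi$, $\phi\xi=0$, $\eta\circ\phi=0$, $\eta(\xi)=1$, $g(\phi X,\phi Y)=g(X,Y)-\eta(X)\eta(Y)$, $\eta(X)=g(\xi,X)$. The corresponding almost Hermitian manifold is $\bar M=M\times\mathbb R$ with $\bar JX=\phi X-\eta(X)\partial_t$, $\bar J\partial_t=\xi$, $\bar g(X,Y)=e^{-2t}g(X,Y)$, $\bar g(\partial_t,\partial_t)=e^{-2t}$, $\bar g(X,\partial_t)=0$ for $X,Y$ tangent to $M$. Curvature conventions: $R(X,Y)Z=[\nabla_X,\nabla_Y]Z-\nabla_{[X,Y]}Z$ for the Levi-Civita connection, $\bar R(\bar X,\bar Y,\bar Z,\bar W)=\bar g(\bar R(\bar X,\bar Y)\bar Z,\bar W)$, and in local coordinates on $M$, $R_{ijkl}=g(R(\partial_i,\partial_j)\partial_k,\partial_l)$, $\phi\partial_j=\phi_j{}^i\partial_i$, $\phi_{ij}=g_{aj}\phi_i{}^a$, $\eta_i=g_{ij}\xi^j$, with summation over repeated indices. *)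

theory Defs
  imports "HOL-Analysis.Analysis"
begin

text \<open>Points of a coordinate chart are vectors in real^'i; coordinate index type 'i.
Tensor fields are given by their components in the coordinate frame.\<close>

definition pd :: "(real^'i \<Rightarrow> real) \<Rightarrow> 'i \<Rightarrow> real^'i \<Rightarrow> real" where
  "pd f i x = vector_derivative (\<lambda>s. f (x + s *\<^sub>R axis i 1)) (at 0)"

fun Ck :: "nat \<Rightarrow> (real^'i) set \<Rightarrow> (real^'i \<Rightarrow> real) \<Rightarrow> bool" where
  "Ck 0 U f = continuous_on U f"
| "Ck (Suc k) U f = (continuous_on U f \<and>
      (\<forall>x\<in>U. \<forall>i. (\<lambda>s. f (x + s *\<^sub>R axis i 1)) differentiable (at 0)) \<and>
      (\<forall>i. Ck k U (pd f i)))"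

definition smooth_on :: "(real^'i) set \<Rightarrow> (real^'i \<Rightarrow> real) \<Rightarrow> bool" where
  "smooth_on U f \<longleftrightarrow> (\<forall>k. Ck k U f)"

definition riemannian_metric :: "(real^'i) set \<Rightarrow> (real^'i \<Rightarrow> 'i \<Rightarrow> 'i \<Rightarrow> real) \<Rightarrow> bool" where
  "riemannian_metric U G \<longleftrightarrow> open U \<and>
     (\<forall>a b. smooth_on U (\<lambda>x. G x a b)) \<and>
     (\<forall>x\<in>U. \<forall>a b. G x a b = G x b a) \<and>
     (\<forall>x\<in>U. \<forall>v::real^'i. v \<noteq> 0 \<longrightarrow> (\<Sum>a\<in>UNIV. \<Sum>b\<in>UNIV. v$a * v$b * G x a b) > 0)"

definition ginv :: "(real^'i \<Rightarrow> 'i \<Rightarrow> 'i \<Rightarrow> real) \<Rightarrow> real^'i \<Rightarrow> 'i \<Rightarrow> 'i \<Rightarrow> real" where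
  "ginv G x a b = matrix_inv (\<chi> p q. G x p q) $ a $ b"

text \<open>Christoffel symbols of the first kind: g(nabla_{d_i} d_j, d_k).\<close>
definition chr1 :: "(real^'i \<Rightarrow> 'i \<Rightarrow> 'i \<Rightarrow> real) \<Rightarrow> real^'i \<Rightarrow> 'i \<Rightarrow> 'i \<Rightarrow> 'i \<Rightarrow> real" where
  "chr1 G x i j k = (pd (\<lambda>y. G y j k) i x + pd (\<lambda>y. G y i k) j x - pd (\<lambda>y. G y i j) k x) / 2"

text \<open>Christoffel symbols Gamma^l_{ij}: nabla_{d_i} d_j = Gamma^l_{ij} d_l (Levi-Civita).\<close>
definition chr :: "(real^'i \<Rightarrow> 'i \<Rightarrow> 'i \<Rightarrow> real) \<Rightarrow> real^'i \<Rightarrow> 'i \<Rightarrow> 'i \<Rightarrow> 'i \<Rightarrow> real" where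
  "chr G x l i j = (\<Sum>k\<in>UNIV. ginv G x l k * chr1 G x i j k)"

text \<open>Component along d_l of R(d_i,d_j)d_k = nabla_i nabla_j d_k - nabla_j nabla_i d_k
  (coordinate fields commute).\<close>
definition curv_up :: "(real^'i \<Rightarrow> 'i \<Rightarrow> 'i \<Rightarrow> real) \<Rightarrow> real^'i \<Rightarrow> 'i \<Rightarrow> 'i \<Rightarrow> 'i \<Rightarrow> 'i \<Rightarrow> real" where
  "curv_up G x l i j k =
     pd (\<lambda>y. chr G y l j k) i x - pd (\<lambda>y. chr G y l i k) j x
     + (\<Sum>m\<in>UNIV. chr G x m j k * chr G x l i m - chr G x m i k * chr G x l j m)"

text \<open>R_{ijkl} = g(R(d_i,d_j)d_k, d_l).\<close>
definition curv :: "(real^'i \<Rightarrow> 'i \<Rightarrow> 'i \<Rightarrow> real) \<Rightarrow> real^'i \<Rightarrow> 'i \<Rightarrow> 'i \<Rightarrow> 'i \<Rightarrow> 'i \<Rightarrow> real" where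
  "curv G x i j k l = (\<Sum>p\<in>UNIV. curv_up G x p i j k * G x p l)"

definition curv_vec :: "(real^'i \<Rightarrow> 'i \<Rightarrow> 'i \<Rightarrow> real) \<Rightarrow> real^'i \<Rightarrow> real^'i \<Rightarrow> real^'i \<Rightarrow> real^'i \<Rightarrow> real^'i \<Rightarrow> real" where
  "curv_vec G x X Y Z W =
     (\<Sum>a\<in>UNIV. \<Sum>b\<in>UNIV. \<Sum>c\<in>UNIV. \<Sum>d\<in>UNIV. X$a * Y$b * Z$c * W$d * curv G x a b c d)"

text \<open>phi x j i = phi_j^i, i.e. phi d_j = sum_i phi_j^i d_i; xi x i = xi^i;
  eta_i = g_{ij} xi^j.\<close>
definition eta_of :: "(real^'i \<Rightarrow> 'i \<Rightarrow> 'i \<Rightarrow> real) \<Rightarrow> (real^'i \<Rightarrow> 'i \<Rightarrow> real) \<Rightarrow> real^'i \<Rightarrow> 'i \<Rightarrow> real" where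
  "eta_of G xi x i = (\<Sum>j\<in>UNIV. G x i j * xi x j)"

definition almost_contact_metric ::
  "(real^'i) set \<Rightarrow> (real^'i \<Rightarrow> 'i \<Rightarrow> 'i \<Rightarrow> real) \<Rightarrow> (real^'i \<Rightarrow> 'i \<Rightarrow> 'i \<Rightarrow> real)
   \<Rightarrow> (real^'i \<Rightarrow> 'i \<Rightarrow> real) \<Rightarrow> bool" where
  "almost_contact_metric U G phi xi \<longleftrightarrow>
     riemannian_metric U G \<and>
     (\<forall>a b. smooth_on U (\<lambda>x. phi x a b)) \<and> (\<forall>a. smooth_on U (\<lambda>x. xi x a)) \<and>
     (\<forall>x\<in>U.
        (\<forall>j k. (\<Sum>i\<in>UNIV. phi x j i * phi x i k) = - (if j = k then 1 else 0) + eta_of G xi x j * xi x k) \<and>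
        (\<forall>i. (\<Sum>j\<in>UNIV. xi x j * phi x j i) = 0) \<and>
        (\<forall>j. (\<Sum>i\<in>UNIV. phi x j i * eta_of G xi x i) = 0) \<and>
        (\<Sum>i\<in>UNIV. eta_of G xi x i * xi x i) = 1 \<and>
        (\<forall>i j. (\<Sum>a\<in>UNIV. \<Sum>b\<in>UNIV. phi x i a * phi x j b * G x a b)
                 = G x i j - eta_of G xi x i * eta_of G xi x j))"

text \<open>Coordinates on M x R: index Some i for the coordinates of M, None for t.\<close>
definition base :: "real^('i::finite option) \<Rightarrow> real^'i" where
  "base y = (\<chi> i. y $ Some i)"

definition tcoord :: "real^('i::finite option) \<Rightarrow> real" where
  "tcoord y = y $ None"

definition Mbar :: "(real^'i) set \<Rightarrow> (real^('i::finite option)) set" where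
  "Mbar U = {y. base y \<in> U}"

definition gbar :: "(real^'i \<Rightarrow> 'i \<Rightarrow> 'i \<Rightarrow> real) \<Rightarrow> real^('i::finite option) \<Rightarrow> ('i::finite) option \<Rightarrow> ('i::finite) option \<Rightarrow> real" where
  "gbar G y a b = exp (-2 * tcoord y) *
     (case (a, b) of (Some i, Some j) \<Rightarrow> G (base y) i j | (None, None) \<Rightarrow> 1 | _ \<Rightarrow> 0)"

text \<open>Jbar y b a = component along d_a of Jbar d_b.
  Jbar d_j = phi d_j - eta_j d_t, Jbar d_t = xi.\<close>
definition Jbar :: "(real^'i \<Rightarrow> 'i \<Rightarrow> 'i \<Rightarrow> real) \<Rightarrow> (real^'i \<Rightarrow> 'i \<Rightarrow> 'i \<Rightarrow> real) \<Rightarrow> (real^'i \<Rightarrow> 'i \<Rightarrow> real)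
     \<Rightarrow> real^('i::finite option) \<Rightarrow> ('i::finite) option \<Rightarrow> ('i::finite) option \<Rightarrow> real" where
  "Jbar G phi xi y b a =
     (case (b, a) of
        (Some j, Some i) \<Rightarrow> phi (base y) j i
      | (Some j, None) \<Rightarrow> - eta_of G xi (base y) j
      | (None, Some i) \<Rightarrow> xi (base y) i
      | (None, None) \<Rightarrow> 0)"

definition Jvec :: "(real^'i \<Rightarrow> 'i \<Rightarrow> 'i \<Rightarrow> real) \<Rightarrow> (real^'i \<Rightarrow> 'i \<Rightarrow> 'i \<Rightarrow> real) \<Rightarrow> (real^'i \<Rightarrow> 'i \<Rightarrow> real)
     \<Rightarrow> real^('i::finite option) \<Rightarrow> real^('i::finite option) \<Rightarrow> real^('i::finite option)" where
  "Jvec G phi xi y X = (\<chi> a. \<Sum>b\<in>UNIV. X $ b * Jbar G phi xi y b a)"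

end

theory Submission
  imports Defs
begin

text \<open>Substituting \<open>u = exp (-t)\<close> turns \<open>gbar = exp (-2t) (g + dt^2)\<close> into the cone metric
  \<open>du^2 + u^2 g\<close> over \<open>(M, g)\<close>. In the coordinates \<open>(x, t)\<close> its Christoffel symbols do not depend
  on \<open>t\<close>, and its curvature tensor is \<open>exp (-2t)\<close> times the tensor that vanishes as soon as one
  argument is \<open>\<partial>/\<partial>t\<close> and equals \<open>R_abcd - (g_ad g_bc - g_ac g_bd)\<close> on \<open>M\<close>: the difference
  between \<open>R\<close> and the curvature tensor of constant curvature 1. Invariance under \<open>Jbar\<close> is
  therefore a linear algebra condition at each point of \<open>M\<close>. Evaluating it on coordinate fields,
  where \<open>Jbar (\<partial>/\<partial>t) = \<xi>\<close> and the \<open>M\<close>-part of \<open>Jbar \<partial>_i\<close> is \<open>\<phi> \<partial>_i\<close>, and reducing the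
  constant-curvature terms with \<open>g(\<phi>., \<phi>.) = g - \<eta>\<otimes>\<eta>\<close>, \<open>\<phi>\<xi> = 0\<close>, \<open>\<eta>\<circ>\<phi> = 0\<close> and \<open>\<eta>(\<xi>) = 1\<close>,
  gives the three equations.\<close>

lemma pd_cong:
  fixes f g :: "real^'i \<Rightarrow> real"
  assumes "open U" "x \<in> U" "\<And>z. z \<in> U \<Longrightarrow> f z = g z"
  shows "pd f i x = pd g i x"
proof -
  let ?S = "{s::real. x + s *\<^sub>R axis i 1 \<in> U}"
  have "open ((\<lambda>s::real. x + s *\<^sub>R axis i 1) -` U)"
    by (rule continuous_open_vimage[OF assms(1)]) (intro continuous_intros)
  then have S: "open ?S" by (simp add: vimage_def)
  have "0 \<in> ?S" using assms by simp
  note transform = has_vector_derivative_transform_within_open[OF _ S this]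
  have "((\<lambda>s. f (x + s *\<^sub>R axis i 1)) has_vector_derivative D) (at 0)
     \<longleftrightarrow> ((\<lambda>s. g (x + s *\<^sub>R axis i 1)) has_vector_derivative D) (at 0)" for D
    using transform assms(3) by (metis (no_types, lifting) mem_Collect_eq)
  then show ?thesis unfolding pd_def vector_derivative_def by simp
qed

lemma smooth_on_differentiable:
  assumes "smooth_on U f" "x \<in> U"
  shows "(\<lambda>s. f (x + s *\<^sub>R axis i 1)) differentiable (at 0)"
  using assms unfolding smooth_on_def by (metis Ck.simps(2))

lemma pd_const: "pd (\<lambda>x. c) m x = 0"
  by (simp add: pd_def)

lemma base_add_Some: "base (y + s *\<^sub>R axis (Some m) 1) = base y + s *\<^sub>R axis m 1"
  by (simp add: base_def vec_eq_iff axis_def)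

lemma tcoord_add_Some: "tcoord (y + s *\<^sub>R axis (Some m) 1) = tcoord y"
  by (simp add: tcoord_def axis_def)

lemma base_add_None: "base (y + s *\<^sub>R axis None 1) = base y"
  by (simp add: base_def vec_eq_iff axis_def)

lemma tcoord_add_None: "tcoord (y + s *\<^sub>R axis None 1) = tcoord y + s"
  by (simp add: tcoord_def axis_def)

lemma open_Mbar: "open U \<Longrightarrow> open (Mbar U)"
proof -
  assume "open U"
  moreover have "continuous_on UNIV base"
    unfolding base_def by (intro continuous_intros)
  ultimately have "open (base -` U)"
    by (intro continuous_imp_open_vimage) auto
  then show ?thesis by (simp add: Mbar_def vimage_def)
qed

lemma
  fixes F :: "real^('i::finite option) \<Rightarrow> real"
  assumes "open U" "base y \<in> U" "\<And>z. base z \<in> U \<Longrightarrow> F z = c (base z)"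
  shows pd_lift_Some: "pd F (Some m) y = pd c m (base y)"
    and pd_lift_None: "pd F None y = 0"
proof -
  have F: "pd F M y = pd (\<lambda>z. c (base z)) M y" for M
    using assms by (intro pd_cong[OF open_Mbar]) (auto simp: Mbar_def)
  show "pd F (Some m) y = pd c m (base y)"
    unfolding F by (simp add: pd_def base_add_Some)
  show "pd F None y = 0"
    unfolding F by (simp add: pd_def base_add_None)
qed

lemma pd_exp_Some:
  fixes h :: "real^'i \<Rightarrow> real"
  assumes "(\<lambda>s. h (base y + s *\<^sub>R axis m 1)) differentiable (at 0)"
  shows "pd (\<lambda>z::real^('i::finite option). exp (-2 * tcoord z) * h (base z)) (Some m) y
         = exp (-2 * tcoord y) * pd h m (base y)"
proof -
  have "((\<lambda>s. h (base y + s *\<^sub>R axis m 1)) has_vector_derivative pd h m (base y)) (at 0)"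
    using assms unfolding pd_def by (simp add: vector_derivative_works[symmetric])
  then have "((\<lambda>s. exp (-2 * tcoord y) * h (base y + s *\<^sub>R axis m 1)) has_vector_derivative
      exp (-2 * tcoord y) * pd h m (base y)) (at 0)"
    by (rule has_vector_derivative_mult_right)
  then show ?thesis unfolding pd_def base_add_Some tcoord_add_Some
    using vector_derivative_at by fastforce
qed

lemma pd_exp_None:
  fixes h :: "real^'i \<Rightarrow> real"
  shows "pd (\<lambda>z::real^('i::finite option). exp (-2 * tcoord z) * h (base z)) None y
         = -2 * exp (-2 * tcoord y) * h (base y)"
proof -
  have "((\<lambda>s. exp (-2 * (tcoord y + s)) * h (base y)) has_real_derivative
      -2 * exp (-2 * tcoord y) * h (base y)) (at 0)"
    by (auto intro!: derivative_eq_intros)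
  then show ?thesis unfolding pd_def base_add_None tcoord_add_None
    by (simp add: has_real_derivative_iff_has_vector_derivative vector_derivative_at)
qed

lemma G_sym: "riemannian_metric U G \<Longrightarrow> x \<in> U \<Longrightarrow> G x a b = G x b a"
  unfolding riemannian_metric_def by blast

lemma pd_G_sym:
  assumes "riemannian_metric U G" "x \<in> U"
  shows "pd (\<lambda>x. G x a b) m x = pd (\<lambda>x. G x b a) m x"
  using assms by (intro pd_cong[of U]) (auto simp: riemannian_metric_def)

lemma chr1_sym:
  assumes "riemannian_metric U G" "x \<in> U"
  shows "chr1 G x i j k = chr1 G x j i k"
  unfolding chr1_def using pd_G_sym[OF assms, of i j k] by simp

lemma chr_sym:
  assumes "riemannian_metric U G" "x \<in> U"
  shows "chr G x l i j = chr G x l j i"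
  unfolding chr_def using chr1_sym[OF assms] by simp

lemma matrix_inv_inverse:
  fixes A :: "real^'n^'n"
  assumes "invertible A"
  shows "A ** matrix_inv A = mat 1" and "matrix_inv A ** A = mat 1"
  using someI_ex[OF assms[unfolded invertible_def]] unfolding matrix_inv_def by auto

lemma matrix_inv_unique:
  fixes A B :: "real^'n^'n"
  assumes "A ** B = mat 1" "B ** A = mat 1"
  shows "matrix_inv A = B"
proof -
  have "invertible A" using assms unfolding invertible_def by blast
  have "matrix_inv A = matrix_inv A ** (A ** B)"
    using assms by (simp add: matrix_mul_rid)
  also have "\<dots> = (matrix_inv A ** A) ** B"
    by (simp add: matrix_mul_assoc)
  also have "\<dots> = B"
    using matrix_inv_inverse(2)[OF \<open>invertible A\<close>] by (simp add: matrix_mul_lid)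
  finally show ?thesis .
qed

lemma ginv_inverse:
  assumes "riemannian_metric U G" "x \<in> U"
  shows G_ginv: "(\<Sum>k\<in>UNIV. G x a k * ginv G x k b) = (if a = b then 1 else 0)"
    and ginv_G: "(\<Sum>k\<in>UNIV. ginv G x a k * G x k b) = (if a = b then 1 else 0)"
proof -
  define A where "A = (\<chi> p q. G x p q)"
  have "v = 0" if "A *v v = 0" for v
  proof (rule ccontr)
    assume "v \<noteq> 0"
    then have "(\<Sum>a\<in>UNIV. \<Sum>b\<in>UNIV. v$a * v$b * G x a b) > 0"
      using assms unfolding riemannian_metric_def by blast
    moreover have "(\<Sum>b\<in>UNIV. v$b * G x a b) = 0" for a
      using that by (simp add: A_def matrix_vector_mult_def vec_eq_iff mult.commute)
    then have "(\<Sum>a\<in>UNIV. \<Sum>b\<in>UNIV. v$a * v$b * G x a b) = 0"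
      by (simp add: sum_distrib_left[symmetric] mult.assoc)
    ultimately show False by simp
  qed
  then have "invertible A"
    using matrix_left_invertible_ker invertible_left_inverse by blast
  note matrix_inv_inverse[OF this]
  moreover have "ginv G x = (\<lambda>a b. matrix_inv A $ a $ b)"
    by (intro ext) (simp add: ginv_def A_def)
  ultimately show "(\<Sum>k\<in>UNIV. G x a k * ginv G x k b) = (if a = b then 1 else 0)"
    and "(\<Sum>k\<in>UNIV. ginv G x a k * G x k b) = (if a = b then 1 else 0)"
    by (auto simp: vec_eq_iff matrix_matrix_mult_def mat_def A_def)
qed

lemma delta_mult: "(if P then 1 else 0) * (c::real) = (if P then c else 0)"
  by simp

lemma mult_delta: "(c::real) * (if P then 1 else 0) = (if P then c else 0)"
  by simp

lemma chr_lower: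
  assumes "riemannian_metric U G" "x \<in> U"
  shows "(\<Sum>m\<in>UNIV. G x i m * chr G x m j k) = chr1 G x j k i"
proof -
  have "(\<Sum>m\<in>UNIV. G x i m * chr G x m j k)
      = (\<Sum>m\<in>UNIV. \<Sum>q\<in>UNIV. G x i m * ginv G x m q * chr1 G x j k q)"
    unfolding chr_def by (simp add: sum_distrib_left sum_distrib_right mult_ac)
  also have "\<dots> = (\<Sum>q\<in>UNIV. (\<Sum>m\<in>UNIV. G x i m * ginv G x m q) * chr1 G x j k q)"
    by (subst sum.swap) (simp add: sum_distrib_right)
  also have "\<dots> = chr1 G x j k i"
    by (simp add: G_ginv[OF assms] delta_mult sum.delta)
  finally show ?thesis .
qed

section \<open>The curvature of \<open>gbar\<close>\<close>

lemma sum_UNIV_option: "(\<Sum>a\<in>(UNIV::'a::finite option set). f a) = f None + (\<Sum>a\<in>UNIV. f (Some a))"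
  by (simp add: UNIV_option_conv sum.reindex)

text \<open>The product metric \<open>g + dt^2\<close>, of which \<open>gbar\<close> is the rescaling by \<open>exp (-2t)\<close>, and the
  Christoffel symbols and curvature of \<open>gbar\<close> with the factors \<open>exp (-2t)\<close> removed.\<close>

definition gprod :: "(real^'i \<Rightarrow> 'i \<Rightarrow> 'i \<Rightarrow> real) \<Rightarrow> real^'i \<Rightarrow> 'i option \<Rightarrow> 'i option \<Rightarrow> real" where
  "gprod G x P Q = (case (P, Q) of (Some i, Some j) \<Rightarrow> G x i j | (None, None) \<Rightarrow> 1 | _ \<Rightarrow> 0)"

definition gprod_inv :: "(real^'i \<Rightarrow> 'i \<Rightarrow> 'i \<Rightarrow> real) \<Rightarrow> real^'i \<Rightarrow> 'i option \<Rightarrow> 'i option \<Rightarrow> real" where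
  "gprod_inv G x P Q = (case (P, Q) of (Some i, Some j) \<Rightarrow> ginv G x i j | (None, None) \<Rightarrow> 1 | _ \<Rightarrow> 0)"

definition chr1_bar :: "(real^'i \<Rightarrow> 'i \<Rightarrow> 'i \<Rightarrow> real) \<Rightarrow> real^'i \<Rightarrow> 'i option \<Rightarrow> 'i option \<Rightarrow> 'i option \<Rightarrow> real" where
  "chr1_bar G x P Q R = (case (P, Q, R) of
     (Some i, Some j, Some k) \<Rightarrow> chr1 G x i j k
   | (Some i, Some j, None) \<Rightarrow> G x i j
   | (Some i, None, Some k) \<Rightarrow> - G x i k
   | (None, Some j, Some k) \<Rightarrow> - G x j k
   | (None, None, None) \<Rightarrow> -1
   | _ \<Rightarrow> 0)"

definition chr_bar :: "(real^'i \<Rightarrow> 'i \<Rightarrow> 'i \<Rightarrow> real) \<Rightarrow> real^'i \<Rightarrow> 'i option \<Rightarrow> 'i option \<Rightarrow> 'i option \<Rightarrow> real" where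
  "chr_bar G x L P Q = (case (L, P, Q) of
     (Some l, Some i, Some j) \<Rightarrow> chr G x l i j
   | (None, Some i, Some j) \<Rightarrow> G x i j
   | (Some l, Some i, None) \<Rightarrow> - (if l = i then 1 else 0)
   | (Some l, None, Some j) \<Rightarrow> - (if l = j then 1 else 0)
   | (None, None, None) \<Rightarrow> -1
   | _ \<Rightarrow> 0)"

definition curv_up_bar :: "(real^'i \<Rightarrow> 'i \<Rightarrow> 'i \<Rightarrow> real) \<Rightarrow> real^'i \<Rightarrow> 'i option \<Rightarrow> 'i option \<Rightarrow> 'i option \<Rightarrow> 'i option \<Rightarrow> real" where
  "curv_up_bar G x L I J K = (case (L, I, J, K) of
     (Some l, Some i, Some j, Some k) \<Rightarrow>
       curv_up G x l i j k - G x j k * (if l = i then 1 else 0) + G x i k * (if l = j then 1 else 0)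
   | _ \<Rightarrow> 0)"

definition unit_curv :: "('a \<Rightarrow> 'a \<Rightarrow> real) \<Rightarrow> 'a \<Rightarrow> 'a \<Rightarrow> 'a \<Rightarrow> 'a \<Rightarrow> real" where
  "unit_curv g a b c d = g a d * g b c - g a c * g b d"

definition extend_by_zero :: "('a \<Rightarrow> 'a \<Rightarrow> 'a \<Rightarrow> 'a \<Rightarrow> real) \<Rightarrow> 'a option \<Rightarrow> 'a option \<Rightarrow> 'a option \<Rightarrow> 'a option \<Rightarrow> real" where
  "extend_by_zero T A B C D = (case (A, B, C, D) of (Some a, Some b, Some c, Some d) \<Rightarrow> T a b c d | _ \<Rightarrow> 0)"

definition cone_curv :: "('a \<Rightarrow> 'a \<Rightarrow> real) \<Rightarrow> ('a \<Rightarrow> 'a \<Rightarrow> 'a \<Rightarrow> 'a \<Rightarrow> real) \<Rightarrow> 'a option \<Rightarrow> 'a option \<Rightarrow> 'a option \<Rightarrow> 'a option \<Rightarrow> real" where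
  "cone_curv g R = extend_by_zero (\<lambda>a b c d. R a b c d - unit_curv g a b c d)"

lemma gbar_gprod: "gbar G z P Q = exp (-2 * tcoord z) * gprod G (base z) P Q"
  by (simp add: gbar_def gprod_def)

lemma pd_gbar:
  assumes "riemannian_metric U G" "base y \<in> U"
  shows "pd (\<lambda>z. gbar G z P Q) M y =
    (case M of None \<Rightarrow> -2 * exp (-2 * tcoord y) * gprod G (base y) P Q
     | Some m \<Rightarrow> exp (-2 * tcoord y) *
         (case (P, Q) of (Some i, Some j) \<Rightarrow> pd (\<lambda>x. G x i j) m (base y) | _ \<Rightarrow> 0))"
proof (cases M)
  case None
  then show ?thesis unfolding gbar_gprod using pd_exp_None[of "\<lambda>x. gprod G x P Q" y] by simp
next
  case (Some m)
  have "(\<lambda>s. gprod G (base y + s *\<^sub>R axis m 1) P Q) differentiable (at 0)"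
  proof (cases P; cases Q)
    fix i j assume "P = Some i" "Q = Some j"
    then show ?thesis using assms smooth_on_differentiable[of U "\<lambda>x. G x i j" "base y" m]
      unfolding riemannian_metric_def gprod_def by simp
  qed (simp_all add: gprod_def)
  then have "pd (\<lambda>z. gbar G z P Q) M y = exp (-2 * tcoord y) * pd (\<lambda>x. gprod G x P Q) m (base y)"
    unfolding gbar_gprod Some by (rule pd_exp_Some)
  moreover have "pd (\<lambda>x. gprod G x P Q) m (base y)
      = (case (P, Q) of (Some i, Some j) \<Rightarrow> pd (\<lambda>x. G x i j) m (base y) | _ \<Rightarrow> 0)"
    by (cases P; cases Q) (simp_all add: gprod_def pd_const)
  ultimately show ?thesis using Some by simp
qed

lemma chr1_gbar:
  assumes "riemannian_metric U G" "base y \<in> U"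
  shows "chr1 (gbar G) y P Q R = exp (-2 * tcoord y) * chr1_bar G (base y) P Q R"
  unfolding chr1_def pd_gbar[OF assms]
  by (cases P; cases Q; cases R) (simp_all add: chr1_bar_def gprod_def chr1_def algebra_simps)

lemma ginv_gbar:
  assumes "riemannian_metric U G" "base y \<in> U"
  shows "ginv (gbar G) y P Q = exp (2 * tcoord y) * gprod_inv G (base y) P Q"
proof -
  define B where "B = (\<chi> p q. gbar G y p q)"
  define C where "C = (\<chi> p q. exp (2 * tcoord y) * gprod_inv G (base y) p q)"
  have e: "exp (- (2 * tcoord y)) * exp (2 * tcoord y) = 1"
    by (simp add: exp_minus field_simps)
  have "(\<Sum>R\<in>UNIV. gbar G y P R * (exp (2 * tcoord y) * gprod_inv G (base y) R Q))
      = (\<Sum>R\<in>UNIV. gprod G (base y) P R * gprod_inv G (base y) R Q)" for P Q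
    unfolding gbar_gprod using e by (simp add: algebra_simps)
  also have "\<dots> P Q = (if P = Q then 1 else 0)" for P Q
    by (cases P; cases Q) (simp_all add: sum_UNIV_option gprod_def gprod_inv_def ginv_inverse[OF assms])
  finally have "B ** C = mat 1"
    by (simp add: vec_eq_iff matrix_matrix_mult_def mat_def B_def C_def)
  have "(\<Sum>R\<in>UNIV. exp (2 * tcoord y) * gprod_inv G (base y) P R * gbar G y R Q)
      = (\<Sum>R\<in>UNIV. gprod_inv G (base y) P R * gprod G (base y) R Q)" for P Q
    unfolding gbar_gprod using e by (simp add: algebra_simps)
  also have "\<dots> P Q = (if P = Q then 1 else 0)" for P Q
    by (cases P; cases Q) (simp_all add: sum_UNIV_option gprod_def gprod_inv_def ginv_inverse[OF assms])
  finally have "C ** B = mat 1"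
    by (simp add: vec_eq_iff matrix_matrix_mult_def mat_def B_def C_def)
  with \<open>B ** C = mat 1\<close> have "matrix_inv B = C" by (rule matrix_inv_unique)
  then show ?thesis by (simp add: ginv_def B_def C_def)
qed

lemma chr_gbar:
  assumes "riemannian_metric U G" "base y \<in> U"
  shows "chr (gbar G) y L P Q = chr_bar G (base y) L P Q"
proof -
  have e: "exp (2 * tcoord y) * exp (- (2 * tcoord y)) = 1"
    by (simp add: exp_minus field_simps)
  have "chr (gbar G) y L P Q = (\<Sum>K\<in>UNIV. gprod_inv G (base y) L K * chr1_bar G (base y) P Q K)"
    unfolding chr_def ginv_gbar[OF assms] chr1_gbar[OF assms]
    by (rule sum.cong) (use e in \<open>simp_all add: algebra_simps\<close>)
  also have "\<dots> = chr_bar G (base y) L P Q"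
    using ginv_G[OF assms] G_sym[OF assms]
    by (cases L; cases P; cases Q)
      (simp_all add: sum_UNIV_option gprod_inv_def chr1_bar_def chr_bar_def chr_def sum_negf)
  finally show ?thesis .
qed

lemma pd_chr_gbar:
  assumes "riemannian_metric U G" "base y \<in> U"
  shows "pd (\<lambda>z. chr (gbar G) z L P Q) M y =
     (case M of Some m \<Rightarrow> pd (\<lambda>x. chr_bar G x L P Q) m (base y) | None \<Rightarrow> 0)"
proof -
  have U: "open U" using assms(1) by (simp add: riemannian_metric_def)
  have "\<And>z. base z \<in> U \<Longrightarrow> chr (gbar G) z L P Q = chr_bar G (base z) L P Q"
    using chr_gbar[OF assms(1)] .
  note lift = pd_lift_Some[of U y "\<lambda>z. chr (gbar G) z L P Q" "\<lambda>x. chr_bar G x L P Q", OF U assms(2) this]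
    pd_lift_None[of U y "\<lambda>z. chr (gbar G) z L P Q" "\<lambda>x. chr_bar G x L P Q", OF U assms(2) this]
  show ?thesis by (cases M) (simp_all add: lift)
qed

lemma curv_up_gbar:
  assumes "riemannian_metric U G" "base y \<in> U"
  shows "curv_up (gbar G) y L I J K = curv_up_bar G (base y) L I J K"
proof -
  have "curv_up (gbar G) y L I J K =
     (case I of Some i \<Rightarrow> pd (\<lambda>x. chr_bar G x L J K) i (base y) | None \<Rightarrow> 0)
   - (case J of Some j \<Rightarrow> pd (\<lambda>x. chr_bar G x L I K) j (base y) | None \<Rightarrow> 0)
   + (\<Sum>M\<in>UNIV. chr_bar G (base y) M J K * chr_bar G (base y) L I M
                - chr_bar G (base y) M I K * chr_bar G (base y) L J M)"
    unfolding curv_up_def pd_chr_gbar[OF assms] chr_gbar[OF assms] ..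
  also have "\<dots> = curv_up_bar G (base y) L I J K"
    by (cases L; cases I; cases J; cases K)
      (simp_all add: sum_UNIV_option chr_bar_def curv_up_bar_def pd_const curv_up_def delta_mult mult_delta
        sum.delta sum.delta' sum_subtractf sum_negf G_sym[OF assms] chr_sym[OF assms]
        pd_G_sym[OF assms] chr_lower[OF assms] chr1_def field_simps)
  finally show ?thesis .
qed


lemma curv_gbar:
  assumes "riemannian_metric U G" "base y \<in> U"
  shows "curv (gbar G) y A B C D = exp (-2 * tcoord y) * cone_curv (G (base y)) (curv G (base y)) A B C D"
proof -
  have "curv (gbar G) y A B C D
      = exp (-2 * tcoord y) * (\<Sum>P\<in>UNIV. curv_up_bar G (base y) P A B C * gprod G (base y) P D)"
    unfolding curv_def curv_up_gbar[OF assms] gbar_gprod by (simp add: sum_distrib_left mult_ac)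
  also have "(\<Sum>P\<in>UNIV. curv_up_bar G (base y) P A B C * gprod G (base y) P D)
      = cone_curv (G (base y)) (curv G (base y)) A B C D"
  proof (cases A; cases B; cases C; cases D)
    fix a b c d assume *: "A = Some a" "B = Some b" "C = Some c" "D = Some d"
    have "curv_up_bar G (base y) (Some p) A B C * gprod G (base y) (Some p) D =
        curv_up G (base y) p a b c * G (base y) p d
        - G (base y) b c * (if p = a then G (base y) p d else 0)
        + G (base y) a c * (if p = b then G (base y) p d else 0)" for p
      using * by (auto simp: curv_up_bar_def gprod_def algebra_simps)
    then have "(\<Sum>P\<in>UNIV. curv_up_bar G (base y) P A B C * gprod G (base y) P D)
       = (\<Sum>p\<in>UNIV. curv_up G (base y) p a b c * G (base y) p d)
         - (\<Sum>p\<in>UNIV. G (base y) b c * (if p = a then G (base y) p d else 0))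
         + (\<Sum>p\<in>UNIV. G (base y) a c * (if p = b then G (base y) p d else 0))"
      by (simp add: sum_UNIV_option curv_up_bar_def sum.distrib sum_subtractf)
    also have "\<dots> = cone_curv (G (base y)) (curv G (base y)) A B C D"
      using * by (simp add: cone_curv_def extend_by_zero_def unit_curv_def curv_def
          sum_distrib_left[symmetric] sum.delta' sum.delta)
    finally show ?thesis .
  qed (simp_all add: sum_UNIV_option curv_up_bar_def gprod_def cone_curv_def extend_by_zero_def)
  finally show ?thesis .
qed

definition contract4 :: "('a::finite \<Rightarrow> real) \<Rightarrow> ('a \<Rightarrow> real) \<Rightarrow> ('a \<Rightarrow> real) \<Rightarrow> ('a \<Rightarrow> real)
    \<Rightarrow> ('a \<Rightarrow> 'a \<Rightarrow> 'a \<Rightarrow> 'a \<Rightarrow> real) \<Rightarrow> real" where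
  "contract4 u v w z S =
     (\<Sum>a\<in>UNIV. u a * (\<Sum>b\<in>UNIV. v b * (\<Sum>c\<in>UNIV. w c * (\<Sum>d\<in>UNIV. z d * S a b c d))))"

definition contract2 :: "('a::finite \<Rightarrow> real) \<Rightarrow> ('a \<Rightarrow> real) \<Rightarrow> ('a \<Rightarrow> 'a \<Rightarrow> real) \<Rightarrow> real" where
  "contract2 u v P = (\<Sum>a\<in>UNIV. u a * (\<Sum>b\<in>UNIV. v b * P a b))"

text \<open>Row \<open>p\<close> of \<open>M\<close> holds the components of the image of the \<open>p\<close>-th basis vector, so
  \<open>pullback4 M S\<close> is the tensor \<open>S(M\<cdot>, M\<cdot>, M\<cdot>, M\<cdot>)\<close>.\<close>

definition pullback4 :: "('a::finite \<Rightarrow> 'a \<Rightarrow> real) \<Rightarrow> ('a \<Rightarrow> 'a \<Rightarrow> 'a \<Rightarrow> 'a \<Rightarrow> real)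
    \<Rightarrow> 'a \<Rightarrow> 'a \<Rightarrow> 'a \<Rightarrow> 'a \<Rightarrow> real" where
  "pullback4 M S p q r s = contract4 (M p) (M q) (M r) (M s) S"

lemma contract4_flat:
  "contract4 u v w z S = (\<Sum>a\<in>UNIV. \<Sum>b\<in>UNIV. \<Sum>c\<in>UNIV. \<Sum>d\<in>UNIV. u a * v b * w c * z d * S a b c d)"
  unfolding contract4_def by (simp add: sum_distrib_left mult_ac)

lemma curv_vec_contract4: "curv_vec G y X Y Z W = contract4 (($) X) (($) Y) (($) Z) (($) W) (curv G y)"
  unfolding curv_vec_def contract4_flat ..

lemma sum_mult_sum_swap:
  fixes f g :: "'a::finite \<Rightarrow> real"
  shows "(\<Sum>a\<in>UNIV. f a * (\<Sum>b\<in>UNIV. g b * H a b)) = (\<Sum>b\<in>UNIV. g b * (\<Sum>a\<in>UNIV. f a * H a b))"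
  by (simp add: sum_distrib_left mult_ac) (rule sum.swap)

lemma sum_sum_mult_swap:
  fixes X F :: "'a::finite \<Rightarrow> real"
  shows "(\<Sum>a\<in>UNIV. (\<Sum>p\<in>UNIV. X p * M p a) * F a) = (\<Sum>p\<in>UNIV. X p * (\<Sum>a\<in>UNIV. M p a * F a))"
  by (simp add: sum_distrib_left sum_distrib_right mult_ac) (rule sum.swap)

lemma contract4_map:
  fixes X Y Z W :: "'a::finite \<Rightarrow> real"
  shows "contract4 (\<lambda>a. \<Sum>p\<in>UNIV. X p * M p a) (\<lambda>b. \<Sum>q\<in>UNIV. Y q * M q b)
            (\<lambda>c. \<Sum>r\<in>UNIV. Z r * M r c) (\<lambda>d. \<Sum>s\<in>UNIV. W s * M s d) S
       = contract4 X Y Z W (pullback4 M S)"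
proof -
  have "\<And>p H. (\<Sum>a\<in>UNIV. M p a * (\<Sum>q\<in>UNIV. Y q * H a q)) = (\<Sum>q\<in>UNIV. Y q * (\<Sum>a\<in>UNIV. M p a * H a q))"
    and "\<And>p H. (\<Sum>a\<in>UNIV. M p a * (\<Sum>q\<in>UNIV. Z q * H a q)) = (\<Sum>q\<in>UNIV. Z q * (\<Sum>a\<in>UNIV. M p a * H a q))"
    and "\<And>p H. (\<Sum>a\<in>UNIV. M p a * (\<Sum>q\<in>UNIV. W q * H a q)) = (\<Sum>q\<in>UNIV. W q * (\<Sum>a\<in>UNIV. M p a * H a q))"
    by (rule sum_mult_sum_swap)+
  then show ?thesis
    unfolding contract4_def pullback4_def by (simp only: sum_sum_mult_swap)
qed

lemma contract4_axis: "contract4 (($) (axis A 1)) (($) (axis B 1)) (($) (axis C 1)) (($) (axis D 1)) S = S A B C D"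
  unfolding contract4_def by (simp add: axis_def delta_mult sum.delta' sum.delta)

lemma contract4_map_invariant_iff:
  fixes S :: "'a::finite \<Rightarrow> 'a \<Rightarrow> 'a \<Rightarrow> 'a \<Rightarrow> real"
  shows "(\<forall>X Y Z W :: real^'a. contract4 (($) X) (($) Y) (($) Z) (($) W) S =
      contract4 (\<lambda>a. \<Sum>p\<in>UNIV. X$p * M p a) (\<lambda>b. \<Sum>q\<in>UNIV. Y$q * M q b)
        (\<lambda>c. \<Sum>r\<in>UNIV. Z$r * M r c) (\<lambda>d. \<Sum>s\<in>UNIV. W$s * M s d) S)
    \<longleftrightarrow> (\<forall>A B C D. S A B C D = pullback4 M S A B C D)"
  unfolding contract4_map
proof
  assume "\<forall>X Y Z W :: real^'a. contract4 (($) X) (($) Y) (($) Z) (($) W) S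
      = contract4 (($) X) (($) Y) (($) Z) (($) W) (pullback4 M S)"
  from this[rule_format, of "axis A 1" "axis B 1" "axis C 1" "axis D 1" for A B C D]
  show "\<forall>A B C D. S A B C D = pullback4 M S A B C D"
    unfolding contract4_axis by blast
next
  assume "\<forall>A B C D. S A B C D = pullback4 M S A B C D"
  then have "pullback4 M S = S" by (intro ext) simp
  then show "\<forall>X Y Z W :: real^'a. contract4 (($) X) (($) Y) (($) Z) (($) W) S
      = contract4 (($) X) (($) Y) (($) Z) (($) W) (pullback4 M S)"
    by simp
qed

lemma contract4_diff:
  "contract4 u v w z (\<lambda>a b c d. F a b c d - P a b c d) = contract4 u v w z F - contract4 u v w z P"
  unfolding contract4_def by (simp add: sum_subtractf algebra_simps)

lemma sum_mult_sum_product: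
  fixes F H :: "'a::finite \<Rightarrow> real"
  shows "(\<Sum>a\<in>UNIV. u a * (\<Sum>b\<in>UNIV. v b * (F a * H b)))
    = (\<Sum>a\<in>UNIV. u a * F a) * (\<Sum>b\<in>UNIV. v b * H b)"
  by (simp add: sum_product sum_distrib_left mult_ac) (rule sum.swap)

lemma contract4_mult_ad_bc: "contract4 u v w z (\<lambda>a b c d. P a d * Q b c) = contract2 u z P * contract2 v w Q"
proof -
  have inner: "(\<Sum>c\<in>UNIV. w c * (\<Sum>d\<in>UNIV. z d * (P a d * Q b c)))
      = (\<Sum>d\<in>UNIV. z d * P a d) * (\<Sum>c\<in>UNIV. w c * Q b c)" for a b
    by (simp add: sum_product sum_distrib_left mult_ac) (rule sum.swap)
  show ?thesis unfolding contract4_def contract2_def inner sum_mult_sum_product ..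
qed

lemma contract4_mult_ac_bd: "contract4 u v w z (\<lambda>a b c d. P a c * Q b d) = contract2 u w P * contract2 v z Q"
proof -
  have inner: "(\<Sum>c\<in>UNIV. w c * (\<Sum>d\<in>UNIV. z d * (P a c * Q b d)))
      = (\<Sum>c\<in>UNIV. w c * P a c) * (\<Sum>d\<in>UNIV. z d * Q b d)" for a b
    by (simp add: sum_product sum_distrib_left mult_ac) (rule sum.swap)
  show ?thesis unfolding contract4_def contract2_def inner sum_mult_sum_product ..
qed

lemma contract4_unit_curv:
  "contract4 u v w z (unit_curv g) = contract2 u z g * contract2 v w g - contract2 u w g * contract2 v z g"
  unfolding unit_curv_def contract4_diff contract4_mult_ad_bc contract4_mult_ac_bd ..

lemma pullback4_scale: "pullback4 M (\<lambda>a b c d. k * S a b c d) A B C D = k * pullback4 M S A B C D"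
  unfolding pullback4_def contract4_def by (simp add: sum_distrib_left mult_ac)

lemma pullback4_extend_by_zero:
  "pullback4 M (extend_by_zero T) A B C D
    = contract4 (\<lambda>i. M A (Some i)) (\<lambda>i. M B (Some i)) (\<lambda>i. M C (Some i)) (\<lambda>i. M D (Some i)) T"
  unfolding pullback4_def contract4_def by (simp add: sum_UNIV_option extend_by_zero_def)

section \<open>The algebraic condition at a point\<close>

definition acm_curvature_conditions :: "('a::finite \<Rightarrow> 'a \<Rightarrow> real) \<Rightarrow> ('a \<Rightarrow> 'a \<Rightarrow> real)
    \<Rightarrow> ('a \<Rightarrow> real) \<Rightarrow> ('a \<Rightarrow> real) \<Rightarrow> ('a \<Rightarrow> 'a \<Rightarrow> 'a \<Rightarrow> 'a \<Rightarrow> real) \<Rightarrow> bool" where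
  "acm_curvature_conditions g phi xi eta R \<longleftrightarrow> (\<forall>i j k l.
     R i j k l - contract4 (phi i) (phi j) (phi k) (phi l) R
       = g i l * eta j * eta k + g j k * eta i * eta l - g i k * eta j * eta l - g j l * eta i * eta k
     \<and> contract4 xi (phi j) (phi k) (phi l) R = 0
     \<and> contract4 xi (phi j) xi (phi l) R = - g j l + eta j * eta l)"

locale almost_contact_algebra =
  fixes g phi :: "'n::finite \<Rightarrow> 'n \<Rightarrow> real" and xi eta :: "'n \<Rightarrow> real"
  assumes g_sym: "g a b = g b a"
    and eta_eq: "eta i = (\<Sum>j\<in>UNIV. g i j * xi j)"
    and xi_phi: "(\<Sum>j\<in>UNIV. xi j * phi j i) = 0"
    and phi_eta: "(\<Sum>i\<in>UNIV. phi j i * eta i) = 0"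
    and eta_xi: "(\<Sum>i\<in>UNIV. eta i * xi i) = 1"
    and phi_phi_g: "(\<Sum>a\<in>UNIV. \<Sum>b\<in>UNIV. phi i a * phi j b * g a b) = g i j - eta i * eta j"
begin

lemma contract2_phi_phi: "contract2 (phi i) (phi l) g = g i l - eta i * eta l"
  using phi_phi_g[of i l] unfolding contract2_def by (simp add: sum_distrib_left mult_ac)

lemma contract2_xi_phi: "contract2 xi (phi l) g = 0"
proof -
  have "contract2 xi (phi l) g = (\<Sum>d\<in>UNIV. phi l d * (\<Sum>a\<in>UNIV. xi a * g a d))"
    unfolding contract2_def by (simp add: sum_distrib_left mult_ac) (rule sum.swap)
  also have "\<dots> = (\<Sum>d\<in>UNIV. phi l d * eta d)"
    unfolding eta_eq by (intro sum.cong refl) (simp add: g_sym mult.commute)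
  finally show ?thesis using phi_eta by simp
qed

lemma contract2_phi_xi: "contract2 (phi j) xi g = 0"
  unfolding contract2_def using phi_eta[of j] by (simp add: eta_eq mult_ac)

lemma contract2_xi_xi: "contract2 xi xi g = 1"
  unfolding contract2_def using eta_xi by (simp add: eta_eq mult_ac)

lemmas contract2_acm = contract2_phi_phi contract2_xi_phi contract2_phi_xi contract2_xi_xi

lemma cone_curv_invariant_imp_conditions:
  assumes "\<forall>A B C D. cone_curv g R A B C D = contract4 (case_option xi phi A) (case_option xi phi B)
      (case_option xi phi C) (case_option xi phi D) (\<lambda>a b c d. R a b c d - unit_curv g a b c d)"
  shows "acm_curvature_conditions g phi xi eta R"
  unfolding acm_curvature_conditions_def
proof (intro allI conjI)
  fix i j k l
  note test = assms[rule_format, unfolded cone_curv_def extend_by_zero_def contract4_diff contract4_unit_curv]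
  from test[of "Some i" "Some j" "Some k" "Some l"]
  show "R i j k l - contract4 (phi i) (phi j) (phi k) (phi l) R
      = g i l * eta j * eta k + g j k * eta i * eta l - g i k * eta j * eta l - g j l * eta i * eta k"
    by (simp add: contract2_acm unit_curv_def algebra_simps)
  from test[of None "Some j" "Some k" "Some l"]
  show "contract4 xi (phi j) (phi k) (phi l) R = 0"
    by (simp add: contract2_acm)
  from test[of None "Some j" None "Some l"]
  show "contract4 xi (phi j) xi (phi l) R = - g j l + eta j * eta l"
    by (simp add: contract2_acm)
qed

lemma conditions_imp_cone_curv_invariant:
  assumes "acm_curvature_conditions g phi xi eta R"
  shows "cone_curv g R A B C D = contract4 (case_option xi phi A) (case_option xi phi B)
      (case_option xi phi C) (case_option xi phi D) (\<lambda>a b c d. R a b c d - unit_curv g a b c d)"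
proof -
  define T where "T = (\<lambda>a b c d. R a b c d - unit_curv g a b c d)"
  have T_phi: "T i j k l = contract4 (phi i) (phi j) (phi k) (phi l) T" for i j k l
    using assms unfolding acm_curvature_conditions_def T_def contract4_diff contract4_unit_curv contract2_acm
    by (simp add: unit_curv_def algebra_simps)
  then have T: "pullback4 phi T = T"
    by (intro ext) (simp add: pullback4_def)
  let ?K = "case_option xi phi"
  show ?thesis
  proof (cases "A = None \<or> B = None \<or> C = None \<or> D = None")
    case True
    have "contract4 (?K A) (?K B) (?K C) (?K D) T
        = contract4 (\<lambda>a. \<Sum>p\<in>UNIV. ?K A p * phi p a) (\<lambda>b. \<Sum>q\<in>UNIV. ?K B q * phi q b)
            (\<lambda>c. \<Sum>r\<in>UNIV. ?K C r * phi r c) (\<lambda>d. \<Sum>s\<in>UNIV. ?K D s * phi s d) T"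
      unfolding contract4_map T ..
    also have "\<dots> = 0"
      using True xi_phi by (auto simp: contract4_def)
    finally show ?thesis
      using True by (auto simp: T_def cone_curv_def extend_by_zero_def split: option.splits)
  next
    case False
    then obtain a b c d where "A = Some a" "B = Some b" "C = Some c" "D = Some d" by auto
    then show ?thesis
      using T_phi[of a b c d] by (simp add: cone_curv_def extend_by_zero_def T_def)
  qed
qed

lemma cone_curv_invariant_iff_conditions:
  "(\<forall>A B C D. cone_curv g R A B C D = contract4 (case_option xi phi A) (case_option xi phi B)
      (case_option xi phi C) (case_option xi phi D) (\<lambda>a b c d. R a b c d - unit_curv g a b c d))
    \<longleftrightarrow> acm_curvature_conditions g phi xi eta R"
  using cone_curv_invariant_imp_conditions conditions_imp_cone_curv_invariant by blast

end

lemma almost_contact_metric_algebra: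
  assumes "almost_contact_metric U G phi xi" "x \<in> U"
  shows "almost_contact_algebra (G x) (phi x) (xi x) (eta_of G xi x)"
  using assms G_sym[of U G x] unfolding almost_contact_metric_def almost_contact_algebra_def
  by (auto simp: eta_of_def)

lemma Jbar_row_Some: "(\<lambda>i. Jbar G phi xi y A (Some i)) = case_option (xi (base y)) (phi (base y)) A"
  by (cases A) (auto simp: Jbar_def)

lemma curv_gbar_Jbar_invariant_iff:
  assumes "almost_contact_metric U G phi xi" "base y \<in> U"
  shows "(\<forall>X Y Z W. curv_vec (gbar G) y X Y Z W
          = curv_vec (gbar G) y (Jvec G phi xi y X) (Jvec G phi xi y Y) (Jvec G phi xi y Z) (Jvec G phi xi y W))
    \<longleftrightarrow> acm_curvature_conditions (G (base y)) (phi (base y)) (xi (base y)) (eta_of G xi (base y)) (curv G (base y))"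
proof -
  have rm: "riemannian_metric U G" using assms(1) by (simp add: almost_contact_metric_def)
  have "curv (gbar G) y = (\<lambda>A B C D. exp (-2 * tcoord y) * cone_curv (G (base y)) (curv G (base y)) A B C D)"
    using curv_gbar[OF rm assms(2)] by (intro ext) simp
  then have "(\<forall>A B C D. curv (gbar G) y A B C D = pullback4 (Jbar G phi xi y) (curv (gbar G) y) A B C D)
    \<longleftrightarrow> (\<forall>A B C D. cone_curv (G (base y)) (curv G (base y)) A B C D
          = pullback4 (Jbar G phi xi y) (cone_curv (G (base y)) (curv G (base y))) A B C D)"
    by (simp add: pullback4_scale)
  also have "\<dots> \<longleftrightarrow> acm_curvature_conditions (G (base y)) (phi (base y)) (xi (base y))
      (eta_of G xi (base y)) (curv G (base y))"
    unfolding cone_curv_def[of "G (base y)"] pullback4_extend_by_zero Jbar_row_Some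
    using almost_contact_algebra.cone_curv_invariant_iff_conditions[OF almost_contact_metric_algebra[OF assms]]
    unfolding cone_curv_def .
  finally show ?thesis
    unfolding curv_vec_contract4 Jvec_def vec_lambda_beta contract4_map_invariant_iff .
qed

lemma base_image_Mbar: "base ` Mbar U = U"
proof (intro equalityI subsetI)
  fix x assume "x \<in> U"
  moreover have "base (\<chi> P. case P of Some i \<Rightarrow> x $ i | None \<Rightarrow> 0) = x"
    by (simp add: base_def vec_eq_iff)
  ultimately show "x \<in> base ` Mbar U" unfolding Mbar_def by (metis (mono_tags) image_eqI mem_Collect_eq)
qed (auto simp: Mbar_def)

theorem lemma3:
  fixes n :: nat
    and U :: "(real^'n) set"
    and G :: "real^'n \<Rightarrow> 'n \<Rightarrow> 'n \<Rightarrow> real"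
    and phi :: "real^'n \<Rightarrow> 'n \<Rightarrow> 'n \<Rightarrow> real"
    and xi :: "real^'n \<Rightarrow> 'n \<Rightarrow> real"
  assumes "CARD('n) = 2 * n + 1"
    and "almost_contact_metric U G phi xi"
  shows "(\<forall>y\<in>Mbar U. \<forall>X Y Z W.
            curv_vec (gbar G) y X Y Z W
            = curv_vec (gbar G) y (Jvec G phi xi y X) (Jvec G phi xi y Y)
                                   (Jvec G phi xi y Z) (Jvec G phi xi y W))
     \<longleftrightarrow>
     (\<forall>x\<in>U. \<forall>i j k l.
        curv G x i j k l
          - (\<Sum>a\<in>UNIV. \<Sum>b\<in>UNIV. \<Sum>c\<in>UNIV. \<Sum>d\<in>UNIV.
               phi x i a * phi x j b * phi x k c * phi x l d * curv G x a b c d)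
          = G x i l * eta_of G xi x j * eta_of G xi x k + G x j k * eta_of G xi x i * eta_of G xi x l
            - G x i k * eta_of G xi x j * eta_of G xi x l - G x j l * eta_of G xi x i * eta_of G xi x k
        \<and> (\<Sum>a\<in>UNIV. \<Sum>b\<in>UNIV. \<Sum>c\<in>UNIV. \<Sum>d\<in>UNIV.
               xi x a * phi x j b * phi x k c * phi x l d * curv G x a b c d) = 0
        \<and> (\<Sum>a\<in>UNIV. \<Sum>b\<in>UNIV. \<Sum>c\<in>UNIV. \<Sum>d\<in>UNIV.
               xi x a * xi x c * phi x j b * phi x l d * curv G x a b c d)
            = - G x j l + eta_of G xi x j * eta_of G xi x l)"
  (is "?L \<longleftrightarrow> (\<forall>x\<in>U. ?C x)")
proof -
  have conditions: "?C x \<longleftrightarrow> acm_curvature_conditions (G x) (phi x) (xi x) (eta_of G xi x) (curv G x)" for x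
    unfolding acm_curvature_conditions_def contract4_flat by (simp add: mult_ac)
  have "?L \<longleftrightarrow> (\<forall>y\<in>Mbar U. acm_curvature_conditions (G (base y)) (phi (base y)) (xi (base y))
      (eta_of G xi (base y)) (curv G (base y)))"
    using curv_gbar_Jbar_invariant_iff[OF assms(2)] by (simp add: Mbar_def)
  also have "\<dots> \<longleftrightarrow> (\<forall>x\<in>base ` Mbar U. acm_curvature_conditions (G x) (phi x) (xi x) (eta_of G xi x) (curv G x))"
    by blast
  finally show ?thesis
    unfolding base_image_Mbar conditions .
qed

end
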